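(* Let $H:\mathbb{R}^d\times\mathbb{R}^d\to\mathbb{R}$ be $C^1$, $\alpha_H$-strongly convex in $p$ uniformly in $x$, and set $F=D_pH$, $G=-D_xH$, assumed continuous. If for all $x,y,p,q\in\mathbb{R}^d$, $(F(x,p)-F(y,q))\cdot(p-q)+(G(x,p)-G(y,q))\cdot(x-y)\ge0$, then for all $x,y,p,q\in\mathbb{R}^d$, $(F(x,p)-F(y,q))\cdot(p-q)+(G(x,p)-G(y,q))\cdot(x-y)\ge\alpha_H|p-q|^2$.
   Context: $\alpha_H$-strong convexity in $p$ uniformly in $x$: for every $x$, $p\mapsto H(x,p)-\frac{\alpha_H}2|p|^2$ is convex, with $\alpha_H>0$. *)

theory Defs
  imports "HOL-Analysis.Analysis"
begin

end

theory Submission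
  imports Defs
begin

text \<open>Taking \<open>p = q\<close> in the monotonicity hypothesis shows that \<open>x \<mapsto> G x p\<close>, the gradient of
  \<open>x \<mapsto> - H x p\<close>, is monotone; hence \<open>- H x p\<close> lies above its tangent planes in \<open>x\<close>.
  Strong convexity puts \<open>H x p\<close> above its tangent planes in \<open>p\<close> with the extra margin
  \<open>\<alpha>H/2 |q - p|\<^sup>2\<close>. Adding the two tangent inequalities in \<open>p\<close> (at \<open>(x, p)\<close> and at \<open>(y, q)\<close>) and
  the two in \<open>x\<close> (from \<open>(x, p)\<close> towards \<open>y\<close> and from \<open>(y, q)\<close> towards \<open>x\<close>), every value of \<open>H\<close>
  cancels and the claim remains.\<close>

lemma has_derivative_partial_fst:
  assumes "((\<lambda>z. f (fst z) (snd z)) has_derivative L) (at (x, y))"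
  shows "((\<lambda>x. f x y) has_derivative (\<lambda>u. L (u, 0))) (at x)"
proof -
  have "((\<lambda>u. (u, y)) has_derivative (\<lambda>u. (u, 0))) (at x)"
    by (auto intro!: derivative_eq_intros)
  from has_derivative_compose[OF this assms] show ?thesis by simp
qed

lemma has_derivative_partial_snd:
  assumes "((\<lambda>z. f (fst z) (snd z)) has_derivative L) (at (x, y))"
  shows "((\<lambda>y. f x y) has_derivative (\<lambda>v. L (0, v))) (at y)"
proof -
  have "((\<lambda>v. (x, v)) has_derivative (\<lambda>v. (0, v))) (at y)"
    by (auto intro!: derivative_eq_intros)
  from has_derivative_compose[OF this assms] show ?thesis by simp
qed

lemma has_field_derivative_along_line:
  fixes g :: "'a::real_normed_vector \<Rightarrow> real"
  assumes "(g has_derivative g') (at (p + t *\<^sub>R v))"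
  shows "((\<lambda>s. g (p + s *\<^sub>R v)) has_field_derivative g' v) (at t)"
proof -
  have "((\<lambda>s. p + s *\<^sub>R v) has_derivative (\<lambda>s. s *\<^sub>R v)) (at t)"
    by (auto intro!: derivative_eq_intros)
  from has_derivative_compose[OF this assms]
  have "((\<lambda>s. g (p + s *\<^sub>R v)) has_derivative (\<lambda>s. g' (s *\<^sub>R v))) (at t)" .
  moreover have "(\<lambda>s. g' (s *\<^sub>R v)) = (*) (g' v)"
    using has_derivative_linear[OF assms] by (auto simp: linear_scale)
  ultimately show ?thesis by (simp add: has_field_derivative_def)
qed

lemma convex_on_along_line:
  fixes g :: "'a::real_vector \<Rightarrow> real"
  assumes "convex_on UNIV g"
  shows "convex_on UNIV (\<lambda>t::real. g (p + t *\<^sub>R v))"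
proof (rule convex_onI)
  fix t s r :: real assume "0 < t" "t < 1"
  have "g (p + ((1 - t) * s + t * r) *\<^sub>R v) = g ((1 - t) *\<^sub>R (p + s *\<^sub>R v) + t *\<^sub>R (p + r *\<^sub>R v))"
    by (simp add: algebra_simps)
  also have "\<dots> \<le> (1 - t) * g (p + s *\<^sub>R v) + t * g (p + r *\<^sub>R v)"
    using assms \<open>0 < t\<close> \<open>t < 1\<close> by (intro convex_onD) auto
  finally show "g (p + ((1 - t) *\<^sub>R s + t *\<^sub>R r) *\<^sub>R v) \<le> (1 - t) * g (p + s *\<^sub>R v) + t * g (p + r *\<^sub>R v)"
    by simp
qed simp

lemma convex_on_imp_above_tangent_plane:
  fixes g :: "'a::real_normed_vector \<Rightarrow> real"
  assumes "convex_on UNIV g" and "(g has_derivative g') (at p)"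
  shows "g p + g' (q - p) \<le> g q"
proof -
  let ?\<phi> = "\<lambda>t. g (p + t *\<^sub>R (q - p))"
  have "(?\<phi> has_field_derivative g' (q - p)) (at 0)"
    using assms(2) by (intro has_field_derivative_along_line) simp
  with convex_on_along_line[OF assms(1)] have "g' (q - p) * (1 - 0) \<le> ?\<phi> 1 - ?\<phi> 0"
    by (intro convex_on_imp_above_tangent) (auto intro: has_field_derivative_at_within)
  then show ?thesis by simp
qed

lemma monotone_gradient_imp_above_tangent_plane:
  fixes h :: "'a::real_inner \<Rightarrow> real"
  assumes deriv: "\<And>z. (h has_derivative (\<lambda>u. D z \<bullet> u)) (at z)"
    and mono: "\<And>z w. 0 \<le> (D z - D w) \<bullet> (z - w)"
  shows "h x + D x \<bullet> (y - x) \<le> h y"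
proof -
  define v where "v = y - x"
  let ?\<phi> = "\<lambda>t. h (x + t *\<^sub>R v)"
  have \<phi>': "(?\<phi> has_field_derivative D (x + t *\<^sub>R v) \<bullet> v) (at t)" for t
    by (rule has_field_derivative_along_line[OF deriv])
  then have "continuous_on {0..1} ?\<phi>"
    by (meson DERIV_continuous continuous_at_imp_continuous_on)
  then obtain t l where t: "0 < t" "t < 1" and l: "(?\<phi> has_field_derivative l) (at t)"
    and mvt: "?\<phi> 1 - ?\<phi> 0 = (1 - 0) * l"
    using MVT[of 0 1 ?\<phi>] \<phi>' real_differentiable_def by fastforce
  have "l = D (x + t *\<^sub>R v) \<bullet> v"
    using DERIV_unique[OF l \<phi>'] .
  moreover have "0 \<le> t * ((D (x + t *\<^sub>R v) - D x) \<bullet> v)"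
    using mono[of "x + t *\<^sub>R v" x] by simp
  then have "0 \<le> (D (x + t *\<^sub>R v) - D x) \<bullet> v"
    using t by (simp add: zero_le_mult_iff)
  ultimately have "D x \<bullet> v \<le> l"
    by (simp add: inner_diff_left)
  with mvt show ?thesis
    by (simp add: v_def)
qed

lemma strongly_convex_imp_above_tangent_plane:
  fixes h :: "'a::real_inner \<Rightarrow> real"
  assumes conv: "convex_on UNIV (\<lambda>p. h p - \<alpha> / 2 * (norm p)\<^sup>2)"
    and deriv: "(h has_derivative (\<lambda>v. D \<bullet> v)) (at p)"
  shows "h p + D \<bullet> (q - p) + \<alpha> / 2 * (norm (q - p))\<^sup>2 \<le> h q"
proof -
  have "((\<lambda>p. h p - \<alpha> / 2 * (p \<bullet> p)) has_derivative
          (\<lambda>v. D \<bullet> v - \<alpha> / 2 * (p \<bullet> v + v \<bullet> p))) (at p)"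
    by (intro derivative_intros deriv has_derivative_inner has_derivative_ident)
  then have "((\<lambda>p. h p - \<alpha> / 2 * (norm p)\<^sup>2) has_derivative
          (\<lambda>v. D \<bullet> v - \<alpha> * (p \<bullet> v))) (at p)"
    by (simp add: power2_norm_eq_inner inner_commute)
  from convex_on_imp_above_tangent_plane[OF conv this, of q]
  have "h p - \<alpha> / 2 * (norm p)\<^sup>2 + (D \<bullet> (q - p) - \<alpha> * (p \<bullet> (q - p)))
          \<le> h q - \<alpha> / 2 * (norm q)\<^sup>2" .
  moreover have "\<alpha> / 2 * (norm (q - p))\<^sup>2
      = \<alpha> / 2 * (norm q)\<^sup>2 - \<alpha> / 2 * (norm p)\<^sup>2 - \<alpha> * (p \<bullet> (q - p))"
    by (simp add: power2_norm_eq_inner inner_diff_left inner_diff_right inner_commute algebra_simps)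
  ultimately show ?thesis
    by linarith
qed

theorem lemma4p11:
  fixes H :: "'a::euclidean_space \<Rightarrow> 'a \<Rightarrow> real"
    and F G :: "'a \<Rightarrow> 'a \<Rightarrow> 'a"
    and \<alpha>H :: real
  assumes deriv: "\<And>x p. ((\<lambda>z. H (fst z) (snd z)) has_derivative
                      (\<lambda>(u, v). - (G x p \<bullet> u) + F x p \<bullet> v)) (at (x, p))"
    and contF: "continuous_on UNIV (\<lambda>z. F (fst z) (snd z))"
    and contG: "continuous_on UNIV (\<lambda>z. G (fst z) (snd z))"
    and \<alpha>pos: "\<alpha>H > 0"
    and sconv: "\<And>x. convex_on UNIV (\<lambda>p. H x p - \<alpha>H / 2 * (norm p)\<^sup>2)"
    and mono: "\<And>x y p q. (F x p - F y q) \<bullet> (p - q) + (G x p - G y q) \<bullet> (x - y) \<ge> 0"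
  shows "(F x p - F y q) \<bullet> (p - q) + (G x p - G y q) \<bullet> (x - y) \<ge> \<alpha>H * (norm (p - q))\<^sup>2"
proof -
  have H_p: "((\<lambda>p. H x p) has_derivative (\<lambda>v. F x p \<bullet> v)) (at p)" for x p
    using has_derivative_partial_snd[OF deriv] by simp
  have minus_H_x: "((\<lambda>x. - H x p) has_derivative (\<lambda>u. G x p \<bullet> u)) (at x)" for x p
    using has_derivative_minus[OF has_derivative_partial_fst[OF deriv]] by simp
  have G_mono: "0 \<le> (G x p - G y p) \<bullet> (x - y)" for x y p
    using mono[of x p y p] by simp
  note tangent_in_p = strongly_convex_imp_above_tangent_plane[OF sconv H_p]
  note tangent_in_x = monotone_gradient_imp_above_tangent_plane[OF minus_H_x G_mono]
  have "(F x p - F y q) \<bullet> (p - q) = - (F x p \<bullet> (q - p)) - F y q \<bullet> (p - q)"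
    and "(G x p - G y q) \<bullet> (x - y) = - (G x p \<bullet> (y - x)) - G y q \<bullet> (x - y)"
    by (simp_all add: inner_diff_left inner_diff_right)
  with tangent_in_p[of x p q] tangent_in_p[of y q p] tangent_in_x[of x p y] tangent_in_x[of y q x]
  show ?thesis
    by (simp add: norm_minus_commute)
qed

end
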